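(* Let $K$ be a positive integer, let $J$ be a positive integer or $\infty$, and write $[J]=\{1,\dots,J\}$ (with $[J]=\mathbb{Z}_+$ if $J=\infty$). Let $Q=[Q_1,\dots,Q_K]$ with $Q_k:[J]\to\{0,1\}$ and $A=[A_1,\dots,A_K]$ with $A_k:[J]\to\mathbb{R}$, and assume that for every $S\subset\{1,\dots,K\}$ with $\mathcal{R}(S)$ non-empty, the columns of $A_{[\mathcal{R}(S),S]}$ are linearly independent. Let $k\neq k'$ and suppose $\operatorname{supp}(Q_{k'})$ is non-empty. If $k'$ masks $k$, then $A_k$ and $A_{k'}$ are linearly independent.
   Context: $\operatorname{supp}(Q_k)=\{j: Q_k(j)=1\}$. For $S\subset\{1,\dots,K\}$, $\mathcal{R}(S)\subset[J]$ is the set of indices $j$ such that $Q_l(j)=1$ for all $l\in S$ and $Q_l(j)=0$ for all $l\notin S$. $A_{[\mathcal{R},S]}$ denotes the submatrix of $A$ with rows in $\mathcal{R}$ and columns in $S$. We say $k'$ masks $k$ if $\operatorname{supp}(Q_{k'})\subset\operatorname{supp}(Q_k)$. *)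

theory Defs
  imports Main "HOL-Library.Extended_Nat"
begin

definition rows :: "enat \<Rightarrow> nat set" where
  "rows J = {j. 1 \<le> j \<and> enat j \<le> J}"

definition supp :: "enat \<Rightarrow> (nat \<Rightarrow> nat \<Rightarrow> nat) \<Rightarrow> nat \<Rightarrow> nat set" where
  "supp J Q k = {j \<in> rows J. Q k j = 1}"

definition Rset :: "nat \<Rightarrow> enat \<Rightarrow> (nat \<Rightarrow> nat \<Rightarrow> nat) \<Rightarrow> nat set \<Rightarrow> nat set" where
  "Rset K J Q S = {j \<in> rows J. (\<forall>l\<in>S. Q l j = 1) \<and> (\<forall>l\<in>{1..K} - S. Q l j = 0)}"

definition cols_lin_indep :: "(nat \<Rightarrow> nat \<Rightarrow> real) \<Rightarrow> nat set \<Rightarrow> nat set \<Rightarrow> bool" where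
  "cols_lin_indep A R S \<longleftrightarrow>
     (\<forall>c :: nat \<Rightarrow> real. (\<forall>j\<in>R. (\<Sum>l\<in>S. c l * A l j) = 0) \<longrightarrow> (\<forall>l\<in>S. c l = 0))"

definition masks :: "enat \<Rightarrow> (nat \<Rightarrow> nat \<Rightarrow> nat) \<Rightarrow> nat \<Rightarrow> nat \<Rightarrow> bool" where
  "masks J Q k' k \<longleftrightarrow> supp J Q k' \<subseteq> supp J Q k"

end

theory Submission
  imports Defs
begin

text \<open>Pick a row j in the support of Q_k'. Since k' masks k, both k and k' belong to the
  set S of attributes that j carries, and j lies in R(S). The columns of A_[R(S),S] are
  independent, hence so are the columns k, k' alone, and adding the remaining rows of [J]
  cannot create a linear dependence.\<close>

lemma cols_lin_indep_subset:
  assumes "cols_lin_indep A R S" and "T \<subseteq> S" and "finite S"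
  shows "cols_lin_indep A R T"
  unfolding cols_lin_indep_def
proof (intro allI impI)
  fix c :: "nat \<Rightarrow> real"
  assume c: "\<forall>j\<in>R. (\<Sum>l\<in>T. c l * A l j) = 0"
  define c' where "c' l = (if l \<in> T then c l else 0)" for l
  have "(\<Sum>l\<in>S. c' l * A l j) = 0" if "j \<in> R" for j
  proof -
    have "(\<Sum>l\<in>S. c' l * A l j) = (\<Sum>l\<in>T. c l * A l j)"
      using assms(2,3) by (intro sum.mono_neutral_cong_right) (auto simp: c'_def)
    with c that show ?thesis by simp
  qed
  with assms(1) have "\<forall>l\<in>S. c' l = 0"
    unfolding cols_lin_indep_def by blast
  with assms(2) show "\<forall>l\<in>T. c l = 0"
    unfolding c'_def by (metis subsetD)
qed

lemma cols_lin_indep_mono_rows: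
  assumes "cols_lin_indep A R S" and "R \<subseteq> R'"
  shows "cols_lin_indep A R' S"
  using assms unfolding cols_lin_indep_def by blast

lemma Rset_subset_rows: "Rset K J Q S \<subseteq> rows J"
  by (auto simp: Rset_def)

lemma mem_Rset_row_pattern:
  assumes "j \<in> rows J" and "\<forall>l\<in>{1..K}. Q l j \<in> {0, 1}"
  shows "j \<in> Rset K J Q {l \<in> {1..K}. Q l j = 1}"
  using assms by (auto simp: Rset_def)

theorem lemma1:
  fixes K :: nat and J :: enat
    and Q :: "nat \<Rightarrow> nat \<Rightarrow> nat" and A :: "nat \<Rightarrow> nat \<Rightarrow> real"
    and k k' :: nat
  assumes K_pos: "K \<ge> 1" and J_pos: "J \<ge> 1"
    and Q_bin: "\<forall>l\<in>{1..K}. \<forall>j\<in>rows J. Q l j \<in> {0, 1}"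
    and indep: "\<forall>S. S \<subseteq> {1..K} \<and> Rset K J Q S \<noteq> {} \<longrightarrow> cols_lin_indep A (Rset K J Q S) S"
    and k_in: "k \<in> {1..K}" and k'_in: "k' \<in> {1..K}" and neq: "k \<noteq> k'"
    and supp_ne: "supp J Q k' \<noteq> {}"
    and mask: "masks J Q k' k"
  shows "cols_lin_indep A (rows J) {k, k'}"
proof -
  obtain j where j: "j \<in> supp J Q k'"
    using supp_ne by blast
  with mask have j_row: "j \<in> rows J" and "Q k' j = 1" "Q k j = 1"
    by (auto simp: masks_def supp_def)
  define S where "S = {l \<in> {1..K}. Q l j = 1}"
  have S_sub: "S \<subseteq> {1..K}" and kk'_S: "{k, k'} \<subseteq> S"
    using k_in k'_in \<open>Q k' j = 1\<close> \<open>Q k j = 1\<close> by (auto simp: S_def)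
  have "j \<in> Rset K J Q S"
    unfolding S_def using j_row Q_bin by (intro mem_Rset_row_pattern) auto
  with indep S_sub have "cols_lin_indep A (Rset K J Q S) S"
    by blast
  moreover have "finite S"
    using S_sub by (rule finite_subset) simp
  ultimately have "cols_lin_indep A (Rset K J Q S) {k, k'}"
    using cols_lin_indep_subset kk'_S by blast
  then show ?thesis
    using Rset_subset_rows by (rule cols_lin_indep_mono_rows)
qed

end
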